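(* The following decision problem is undecidable: given a transition system $T=(V,\mathit{Init},\mathit{TR})$ and a safety property $P$, all expressed in QFLIA, decide whether there exists an inductive invariant for $T$ and $P$ that is itself a QFLIA formula over $V$. In other words, there is no algorithm that, on every such input $(T,P)$, correctly answers whether a QFLIA inductive invariant for $T$ and $P$ exists.
   Context: QFLIA (quantifier-free linear integer arithmetic) formulas are built from integer-valued variables, integer constants, addition, multiplication by integer constants, the relations $=,<,\le$, and Boolean connectives, with no quantifiers; all variables range over $\mathbb{Z}$. A transition system is a tuple $T=(V,\mathit{Init},\mathit{TR})$ where $V$ is a finite set of integer variables, $\mathit{Init}$ is a QFLIA formula over $V$, and $\mathit{TR}$ is a QFLIA formula over $V\uplus V'$, where $V'=\{v' : v\in V\}$ is a primed copy of $V$. A state is an assignment $V\to\mathbb{Z}$. The initial states are those satisfying $\mathit{Init}$. A pair of states $(s,t)$ is a transition if $\mathit{TR}$ holds when unprimed variables take their values from $s$ and primed variables from $t$. Reachable states are those reachable from an initial state by finitely many transitions. A safety property is a QFLIA formula $P$ over $V$. We write $T\models P$ if every reachable state satisfies $P$. An inductive invariant for $T$ and $P$ is a formula $I$ over $V$ such that: (i) $\mathit{Init}\to I$ is valid; (ii) $I\wedge \mathit{TR}\to I'$ is valid, where $I'$ is obtained from $I$ by replacing each $v\in V$ with $v'$; and (iii) $I\to P$ is valid. *)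

theory Defs
  imports Main "HOL-Library.Nat_Bijection"
begin

datatype 'v lterm =
    Var 'v
  | Const int
  | Add "'v lterm" "'v lterm"
  | CMul int "'v lterm"

datatype 'v fm =
    TT
  | FF
  | Eq "'v lterm" "'v lterm"
  | Lt "'v lterm" "'v lterm"
  | Le "'v lterm" "'v lterm"
  | Neg "'v fm"
  | Conj "'v fm" "'v fm"
  | Disj "'v fm" "'v fm"

primrec teval :: "('v \<Rightarrow> int) \<Rightarrow> 'v lterm \<Rightarrow> int" where
  "teval s (Var v) = s v"
| "teval s (Const c) = c"
| "teval s (Add a b) = teval s a + teval s b"
| "teval s (CMul c a) = c * teval s a"

primrec sat :: "('v \<Rightarrow> int) \<Rightarrow> 'v fm \<Rightarrow> bool" where
  "sat s TT = True"
| "sat s FF = False"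
| "sat s (Eq a b) = (teval s a = teval s b)"
| "sat s (Lt a b) = (teval s a < teval s b)"
| "sat s (Le a b) = (teval s a \<le> teval s b)"
| "sat s (Neg f) = (\<not> sat s f)"
| "sat s (Conj f g) = (sat s f \<and> sat s g)"
| "sat s (Disj f g) = (sat s f \<or> sat s g)"

text \<open>Variables are natural numbers; in a transition formula, \<open>Inl v\<close> is the
unprimed copy v and \<open>Inr v\<close> is the primed copy v'.\<close>

definition well_formed_ts :: "nat set \<Rightarrow> nat fm \<Rightarrow> (nat + nat) fm \<Rightarrow> nat fm \<Rightarrow> bool" where
  "well_formed_ts V Init TR P \<longleftrightarrow>
     finite V \<and> set_fm Init \<subseteq> V \<and> set_fm TR \<subseteq> Inl ` V \<union> Inr ` V \<and> set_fm P \<subseteq> V"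

definition inductive_invariant ::
  "nat set \<Rightarrow> nat fm \<Rightarrow> (nat + nat) fm \<Rightarrow> nat fm \<Rightarrow> nat fm \<Rightarrow> bool" where
  "inductive_invariant V Init TR P I \<longleftrightarrow>
     set_fm I \<subseteq> V \<and>
     (\<forall>s :: nat \<Rightarrow> int. sat s Init \<longrightarrow> sat s I) \<and>
     (\<forall>s :: nat + nat \<Rightarrow> int. sat s (Conj (map_fm Inl I) TR) \<longrightarrow> sat s (map_fm Inr I)) \<and>
     (\<forall>s :: nat \<Rightarrow> int. sat s I \<longrightarrow> sat s P)"

definition has_qflia_invariant :: "nat set \<Rightarrow> nat fm \<Rightarrow> (nat + nat) fm \<Rightarrow> nat fm \<Rightarrow> bool" where
  "has_qflia_invariant V Init TR P \<longleftrightarrow> (\<exists>I. inductive_invariant V Init TR P I)"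

datatype recf =
    Zero
  | Succ
  | Proj nat
  | Comp recf "recf list"
  | Prim recf recf
  | Mn recf

inductive reval :: "recf \<Rightarrow> nat list \<Rightarrow> nat \<Rightarrow> bool" where
  zero: "reval Zero xs 0"
| succ: "reval Succ (x # xs) (Suc x)"
| proj: "i < length xs \<Longrightarrow> reval (Proj i) xs (xs ! i)"
| comp: "list_all2 (\<lambda>g y. reval g xs y) gs ys \<Longrightarrow> reval f ys z \<Longrightarrow> reval (Comp f gs) xs z"
| prim0: "reval f xs y \<Longrightarrow> reval (Prim f g) (0 # xs) y"
| primS: "reval (Prim f g) (n # xs) y \<Longrightarrow> reval g (y # n # xs) z \<Longrightarrow>
          reval (Prim f g) (Suc n # xs) z"
| mn: "reval f (n # xs) 0 \<Longrightarrow> (\<forall>m<n. \<exists>y. y \<noteq> 0 \<and> reval f (m # xs) y) \<Longrightarrow>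
       reval (Mn f) xs n"

primrec encode_term :: "('v \<Rightarrow> nat) \<Rightarrow> 'v lterm \<Rightarrow> nat" where
  "encode_term ev (Var v) = prod_encode (0, ev v)"
| "encode_term ev (Const c) = prod_encode (1, int_encode c)"
| "encode_term ev (Add a b) = prod_encode (2, prod_encode (encode_term ev a, encode_term ev b))"
| "encode_term ev (CMul c a) = prod_encode (3, prod_encode (int_encode c, encode_term ev a))"

primrec encode_fm :: "('v \<Rightarrow> nat) \<Rightarrow> 'v fm \<Rightarrow> nat" where
  "encode_fm ev TT = prod_encode (0, 0)"
| "encode_fm ev FF = prod_encode (1, 0)"
| "encode_fm ev (Eq a b) = prod_encode (2, prod_encode (encode_term ev a, encode_term ev b))"
| "encode_fm ev (Lt a b) = prod_encode (3, prod_encode (encode_term ev a, encode_term ev b))"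
| "encode_fm ev (Le a b) = prod_encode (4, prod_encode (encode_term ev a, encode_term ev b))"
| "encode_fm ev (Neg f) = prod_encode (5, encode_fm ev f)"
| "encode_fm ev (Conj f g) = prod_encode (6, prod_encode (encode_fm ev f, encode_fm ev g))"
| "encode_fm ev (Disj f g) = prod_encode (7, prod_encode (encode_fm ev f, encode_fm ev g))"

definition encode_instance :: "nat set \<Rightarrow> nat fm \<Rightarrow> (nat + nat) fm \<Rightarrow> nat fm \<Rightarrow> nat" where
  "encode_instance V Init TR P =
     prod_encode (set_encode V,
       prod_encode (encode_fm id Init,
         prod_encode (encode_fm sum_encode TR, encode_fm id P)))"

end

theory Submission
  imports Defs
begin

text \<open>Diagonalisation.  Partial recursive functions are compiled to register machines, and a
register machine whose program counter and registers are integer variables is a QFLIA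
transition system.  For a machine that halts, the property ``the machine does not halt with
output 1'' has a QFLIA inductive invariant iff the output is not 1: the finitely many reachable
states are described by a disjunction of QFLIA formulas, and conversely every invariant holds
on all reachable states.

Given a putative decider \<open>f\<close>, consider the machine that runs \<open>f\<close> on the code of an instance
built from this very machine.  Its initial condition cannot contain its own code, but it can pin
four registers to the codes of \<open>V\<close>, of its remaining conjuncts, of the transition formula and
of the property, from which a recursive function reconstructs the code of the whole instance.
The instance then has an invariant iff the answer of \<open>f\<close> on it is not 1, i.e. iff it has none.\<close>

section \<open>Register machines\<close>

datatype instr =
    SetC nat nat nat
  | Move nat nat nat
  | IncR nat nat
  | DecJZ nat nat nat
  | Jmp nat
  | Halt

type_synonym mstate = "nat \<times> (nat \<Rightarrow> nat)"

fun exec_instr :: "nat \<Rightarrow> instr \<Rightarrow> (nat \<Rightarrow> nat) \<Rightarrow> mstate" where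
  "exec_instr p (SetC r k j) s = (j, s(r := k))"
| "exec_instr p (Move r q j) s = (j, s(r := s q))"
| "exec_instr p (IncR r j) s = (j, s(r := Suc (s r)))"
| "exec_instr p (DecJZ r j k) s = (if s r = 0 then (k, s) else (j, s(r := s r - 1)))"
| "exec_instr p (Jmp j) s = (j, s)"
| "exec_instr p Halt s = (p, s)"

definition exec1 :: "instr list \<Rightarrow> mstate \<Rightarrow> mstate" where
  "exec1 prog st =
     (if fst st < length prog then exec_instr (fst st) (prog ! fst st) (snd st) else st)"

definition steps :: "instr list \<Rightarrow> mstate \<Rightarrow> mstate \<Rightarrow> bool" where
  "steps prog st st' \<longleftrightarrow> (\<exists>n. (exec1 prog ^^ n) st = st')"

lemma steps_refl: "steps prog st st"
  unfolding steps_def by (metis funpow_0)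

lemma steps_trans [trans]: "steps prog st1 st2 \<Longrightarrow> steps prog st2 st3 \<Longrightarrow> steps prog st1 st3"
  unfolding steps_def by (metis funpow_add o_apply)

lemma steps_exec1: "exec1 prog st1 = st2 \<Longrightarrow> steps prog st2 st3 \<Longrightarrow> steps prog st1 st3"
  unfolding steps_def by (metis funpow_Suc_right o_apply)

lemma funpow_fixpoint: "f x = x \<Longrightarrow> (f ^^ n) x = x"
  by (induction n) auto

lemma steps_fixpoint_unique:
  assumes "steps prog st st1" "steps prog st st2"
    and "exec1 prog st1 = st1" "exec1 prog st2 = st2"
  shows "st1 = st2"
proof -
  have "st2 = st1" if "(exec1 prog ^^ n1) st = st1" "(exec1 prog ^^ n2) st = st2"
      "exec1 prog st1 = st1" "n1 \<le> n2" for st1 st2 n1 n2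
  proof -
    have "(exec1 prog ^^ n2) st = (exec1 prog ^^ (n2 - n1)) ((exec1 prog ^^ n1) st)"
      using \<open>n1 \<le> n2\<close> by (metis funpow_add le_add_diff_inverse2 o_apply)
    then show ?thesis using that by (simp add: funpow_fixpoint)
  qed
  moreover obtain n1 n2 where "(exec1 prog ^^ n1) st = st1" "(exec1 prog ^^ n2) st = st2"
    using assms(1,2) unfolding steps_def by blast
  ultimately show ?thesis using assms(3,4) by (metis nat_le_linear)
qed

definition code_at :: "instr list \<Rightarrow> nat \<Rightarrow> instr list \<Rightarrow> bool" where
  "code_at prog a c \<longleftrightarrow> a + length c \<le> length prog \<and> take (length c) (drop a prog) = c"

lemma code_at_append:
  "code_at prog a (c1 @ c2) \<longleftrightarrow> code_at prog a c1 \<and> code_at prog (a + length c1) c2"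
proof -
  have "take (length c1 + length c2) (drop a prog) =
      take (length c1) (drop a prog) @ take (length c2) (drop (a + length c1) prog)"
    by (simp add: take_add add.commute)
  then show ?thesis
    unfolding code_at_def by (auto simp: append_eq_append_conv)
qed

lemma code_at_Cons:
  "c \<noteq> [] \<Longrightarrow> code_at prog a (x # c) \<longleftrightarrow> code_at prog a [x] \<and> code_at prog (Suc a) c"
  using code_at_append[of prog a "[x]" c] by simp

lemma steps_instr:
  assumes "code_at prog a [x]" "exec_instr a x s = st"
  shows "steps prog (a, s) st"
proof -
  have "a < length prog" "prog ! a = x"
    using assms(1) unfolding code_at_def by (auto simp: take_Suc_conv_app_nth)
  then show ?thesis
    using assms(2) steps_exec1 steps_refl by (metis exec1_def fst_conv snd_conv)
qed

lemma steps_iterate: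
  assumes "\<And>i t. i < n \<Longrightarrow> Q i t \<Longrightarrow> \<exists>t'. steps prog (a, t) (a, t') \<and> Q (Suc i) t'"
    and "Q 0 t"
  shows "\<exists>t'. steps prog (a, t) (a, t') \<and> Q n t'"
  using assms(1)
proof (induction n)
  case 0
  show ?case using assms(2) steps_refl by blast
next
  case (Suc n)
  then obtain t1 where "steps prog (a, t) (a, t1)" "Q n t1" by force
  moreover obtain t2 where "steps prog (a, t1) (a, t2)" "Q (Suc n) t2"
    using Suc.prems \<open>Q n t1\<close> by blast
  ultimately show ?case by (blast intro: steps_trans)
qed

section \<open>Compiling partial recursive functions\<close>

primrec code_len :: "recf \<Rightarrow> nat" and codes_len :: "recf list \<Rightarrow> nat" where
  "code_len Zero = 1"
| "code_len Succ = 2"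
| "code_len (Proj i) = 1"
| "code_len (Comp f gs) = codes_len gs + code_len f"
| "code_len (Prim f g) = code_len f + code_len g + 7"
| "code_len (Mn f) = code_len f + 5"
| "codes_len [] = 0"
| "codes_len (g # gs) = code_len g + codes_len gs"

text \<open>\<open>compile g ins out b a\<close> is code for \<open>g\<close> placed at address \<open>a\<close>; it reads its arguments
from the registers \<open>ins\<close>, writes the result to \<open>out\<close> and uses the registers from \<open>b\<close> on as
scratch space.  \<open>compiles gs ins j b a\<close> leaves the values of \<open>gs\<close> in the registers
\<open>j, j + 1, \<dots>\<close>.  The loop for \<open>Prim\<close> keeps the accumulator in \<open>b\<close>, the counter in \<open>b + 1\<close> and
the number of remaining iterations in \<open>b + 2\<close>; the search for \<open>Mn\<close> keeps its candidate in \<open>b\<close>.\<close>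

primrec compile :: "recf \<Rightarrow> nat list \<Rightarrow> nat \<Rightarrow> nat \<Rightarrow> nat \<Rightarrow> instr list"
and compiles :: "recf list \<Rightarrow> nat list \<Rightarrow> nat \<Rightarrow> nat \<Rightarrow> nat \<Rightarrow> instr list" where
  "compile Zero ins out b a = [SetC out 0 (a + 1)]"
| "compile Succ ins out b a = [Move out (hd ins) (a + 1), IncR out (a + 2)]"
| "compile (Proj i) ins out b a = [Move out (ins ! i) (a + 1)]"
| "compile (Comp f gs) ins out b a =
     compiles gs ins b (b + length gs) a @
     compile f [b..<b + length gs] out (b + length gs) (a + codes_len gs)"
| "compile (Prim f g) ins out b a =
     compile f (tl ins) b (b + 4) a @
     [SetC (b + 1) 0 (a + code_len f + 1), Move (b + 2) (hd ins) (a + code_len f + 2),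
      DecJZ (b + 2) (a + code_len f + 3) (a + code_len f + code_len g + 6)] @
     compile g (b # (b + 1) # tl ins) (b + 3) (b + 4) (a + code_len f + 3) @
     [Move b (b + 3) (a + code_len f + code_len g + 4),
      IncR (b + 1) (a + code_len f + code_len g + 5),
      Jmp (a + code_len f + 2), Move out b (a + code_len f + code_len g + 7)]"
| "compile (Mn f) ins out b a =
     SetC b 0 (a + 1) # compile f (b # ins) (b + 1) (b + 2) (a + 1) @
     [DecJZ (b + 1) (a + code_len f + 2) (a + code_len f + 4), IncR b (a + code_len f + 3),
      Jmp (a + 1), Move out b (a + code_len f + 5)]"
| "compiles [] ins j b a = []"
| "compiles (g # gs) ins j b a = compile g ins j b a @ compiles gs ins (Suc j) b (a + code_len g)"

lemma length_compile: "length (compile g ins out b a) = code_len g"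
proof (induction g arbitrary: ins out b a)
  case (Comp f gs)
  have "length (compiles gs ins j b a) = codes_len gs" for ins j b a
    using Comp.IH(2) by (induction gs arbitrary: j a) auto
  then show ?case using Comp.IH(1) by simp
qed auto

lemma length_compiles: "length (compiles gs ins j b a) = codes_len gs"
  by (induction gs arbitrary: j a) (auto simp: length_compile)

definition compile_sound :: "recf \<Rightarrow> bool" where
  "compile_sound g \<longleftrightarrow> (\<forall>xs y ins out b a s prog.
     reval g xs y \<longrightarrow> map s ins = xs \<longrightarrow> out \<notin> set ins \<longrightarrow> (\<forall>r\<in>set ins. r < b) \<longrightarrow> out < b \<longrightarrow>
     code_at prog a (compile g ins out b a) \<longrightarrow>
     (\<exists>s'. steps prog (a, s) (a + code_len g, s') \<and> s' out = y \<and>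
           (\<forall>r. r \<noteq> out \<and> r < b \<longrightarrow> s' r = s r)))"

lemma compile_soundD:
  assumes "compile_sound g" "reval g xs y" "map s ins = xs" "out \<notin> set ins"
    "\<forall>r\<in>set ins. r < b" "out < b" "code_at prog a (compile g ins out b a)"
  obtains s' where "steps prog (a, s) (a + code_len g, s')" "s' out = y"
    "\<forall>r. r \<noteq> out \<and> r < b \<longrightarrow> s' r = s r"
  using assms unfolding compile_sound_def by blast

inductive_cases ZeroE: "reval Zero xs y"
inductive_cases SuccE: "reval Succ xs y"
inductive_cases ProjE: "reval (Proj i) xs y"
inductive_cases CompE: "reval (Comp f gs) xs y"
inductive_cases PrimE: "reval (Prim f g) xs y"
inductive_cases MnE: "reval (Mn f) xs y"

lemma compile_sound_Zero: "compile_sound Zero"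
  unfolding compile_sound_def
proof (intro allI impI)
  fix xs y ins out b a s prog
  assume "reval Zero xs y" "code_at prog a (compile Zero ins out b a)"
  then show "\<exists>s'. steps prog (a, s) (a + code_len Zero, s') \<and> s' out = y \<and>
      (\<forall>r. r \<noteq> out \<and> r < b \<longrightarrow> s' r = s r)"
    by (auto elim!: ZeroE intro!: exI[of _ "s(out := 0)"] steps_instr)
qed

lemma compile_sound_Succ: "compile_sound Succ"
  unfolding compile_sound_def
proof (intro allI impI)
  fix xs y ins out b a s prog
  assume "reval Succ xs y" "map s ins = xs" and code: "code_at prog a (compile Succ ins out b a)"
  then obtain i ins' where ins: "ins = i # ins'" and y: "y = Suc (s i)"
    by (cases ins) (auto elim: SuccE)
  have "code_at prog a [Move out i (a + 1)]" "code_at prog (Suc a) [IncR out (a + 2)]"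
    using code ins by (simp_all add: code_at_Cons)
  then have "steps prog (a, s) (a + 1, s(out := s i))"
    and "steps prog (a + 1, s(out := s i)) (a + 2, s(out := Suc (s i)))"
    by (auto intro!: steps_instr)
  then have "steps prog (a, s) (a + 2, s(out := Suc (s i)))"
    by (rule steps_trans)
  then show "\<exists>s'. steps prog (a, s) (a + code_len Succ, s') \<and> s' out = y \<and>
      (\<forall>r. r \<noteq> out \<and> r < b \<longrightarrow> s' r = s r)"
    using y by auto
qed

lemma compile_sound_Proj: "compile_sound (Proj i)"
  unfolding compile_sound_def
proof (intro allI impI)
  fix xs y ins out b a s prog
  assume "reval (Proj i) xs y" "map s ins = xs" "code_at prog a (compile (Proj i) ins out b a)"
  then show "\<exists>s'. steps prog (a, s) (a + code_len (Proj i), s') \<and> s' out = y \<and>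
      (\<forall>r. r \<noteq> out \<and> r < b \<longrightarrow> s' r = s r)"
    by (auto elim!: ProjE intro!: exI[of _ "s(out := s (ins ! i))"] steps_instr)
qed

lemma compiles_sound:
  assumes "\<forall>g\<in>set gs. compile_sound g" "list_all2 (\<lambda>g y. reval g xs y) gs ys"
    "map s ins = xs" "\<forall>r\<in>set ins. r < j" "j + length gs \<le> b"
    "code_at prog a (compiles gs ins j b a)"
  shows "\<exists>s'. steps prog (a, s) (a + codes_len gs, s') \<and>
    (\<forall>i<length gs. s' (j + i) = ys ! i) \<and> (\<forall>r<j. s' r = s r)"
  using assms
proof (induction gs arbitrary: j a s ys)
  case Nil
  show ?case using steps_refl by auto
next
  case (Cons g gs)
  from Cons.prems(2) obtain y ys' where ys: "ys = y # ys'" "reval g xs y"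
    "list_all2 (\<lambda>g y. reval g xs y) gs ys'"
    by (cases ys) auto
  have code: "code_at prog a (compile g ins j b a)"
    "code_at prog (a + code_len g) (compiles gs ins (Suc j) b (a + code_len g))"
    using Cons.prems(6) by (simp_all add: code_at_append length_compile)
  obtain s1 where s1: "steps prog (a, s) (a + code_len g, s1)" "s1 j = y"
    "\<forall>r. r \<noteq> j \<and> r < b \<longrightarrow> s1 r = s r"
    by (rule compile_soundD[OF _ ys(2) Cons.prems(3) _ _ _ code(1)]) (use Cons.prems in auto)
  have "s1 r = s r" if "r \<in> set ins" for r
  proof -
    have "r < j" using that Cons.prems(4) by blast
    then show ?thesis using Cons.prems(5) s1(3) by simp
  qed
  then have "map s1 ins = xs"
    using Cons.prems(3) by (auto intro: map_cong)
  moreover have "\<forall>g\<in>set gs. compile_sound g" "\<forall>r\<in>set ins. r < Suc j" "Suc j + length gs \<le> b"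
    using Cons.prems(1,4,5) by auto
  ultimately obtain s2 where s2: "steps prog (a + code_len g, s1) (a + code_len g + codes_len gs, s2)"
    "\<forall>i<length gs. s2 (Suc j + i) = ys' ! i" "\<forall>r<Suc j. s2 r = s1 r"
    using Cons.IH[OF _ ys(3) _ _ _ code(2)] by blast
  have "steps prog (a, s) (a + codes_len (g # gs), s2)"
    using steps_trans[OF s1(1) s2(1)] by (simp add: add.assoc)
  moreover have "s2 (j + i) = ys ! i" if "i < length (g # gs)" for i
    using that s1(2) s2(2,3) ys(1) by (cases i) auto
  moreover have "s2 r = s r" if "r < j" for r
    using that s1(3) s2(3) Cons.prems(5) by simp
  ultimately show ?case by blast
qed

lemma compile_sound_Comp:
  assumes "compile_sound f" "\<forall>g\<in>set gs. compile_sound g"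
  shows "compile_sound (Comp f gs)"
  unfolding compile_sound_def
proof (intro allI impI)
  fix xs y ins out b a s prog
  assume "reval (Comp f gs) xs y" and ins: "map s ins = xs" "out \<notin> set ins" "\<forall>r\<in>set ins. r < b"
    and out: "out < b" and code: "code_at prog a (compile (Comp f gs) ins out b a)"
  then obtain ys where gs: "list_all2 (\<lambda>g y. reval g xs y) gs ys" and f: "reval f ys y"
    by (auto elim: CompE)
  let ?m = "length gs"
  have code_gs: "code_at prog a (compiles gs ins b (b + ?m) a)"
    and code_f: "code_at prog (a + codes_len gs) (compile f [b..<b + ?m] out (b + ?m) (a + codes_len gs))"
    using code by (simp_all add: code_at_append length_compiles)
  obtain s1 where s1: "steps prog (a, s) (a + codes_len gs, s1)"
    "\<forall>i<?m. s1 (b + i) = ys ! i" "\<forall>r<b. s1 r = s r"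
    using compiles_sound[OF assms(2) gs ins(1,3) order_refl code_gs] by blast
  have "map s1 [b..<b + ?m] = ys"
    using s1(2) list_all2_lengthD[OF gs] by (auto intro: nth_equalityI)
  then obtain s2 where s2: "steps prog (a + codes_len gs, s1) (a + codes_len gs + code_len f, s2)"
    "s2 out = y" "\<forall>r. r \<noteq> out \<and> r < b + ?m \<longrightarrow> s2 r = s1 r"
    by (rule compile_soundD[OF assms(1) f _ _ _ _ code_f]) (use out in auto)
  show "\<exists>s'. steps prog (a, s) (a + code_len (Comp f gs), s') \<and> s' out = y \<and>
      (\<forall>r. r \<noteq> out \<and> r < b \<longrightarrow> s' r = s r)"
  proof (intro exI conjI)
    show "steps prog (a, s) (a + code_len (Comp f gs), s2)"
      using steps_trans[OF s1(1) s2(1)] by (simp add: add.assoc)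
  qed (use s1(3) s2(2,3) in auto)
qed

lemma reval_Prim_chain:
  assumes "reval (Prim f g) (n # xs) z"
  shows "\<exists>ys. length ys = Suc n \<and> reval f xs (ys ! 0) \<and>
    (\<forall>i<n. reval g (ys ! i # i # xs) (ys ! Suc i)) \<and> ys ! n = z"
  using assms
proof (induction n arbitrary: z)
  case 0
  then have "reval f xs z" by (cases rule: PrimE) auto
  then show ?case by (intro exI[of _ "[z]"]) auto
next
  case (Suc n)
  from Suc.prems obtain y where "reval (Prim f g) (n # xs) y" and y: "reval g (y # n # xs) z"
    by (cases rule: PrimE) auto
  with Suc.IH obtain ys where ys: "length ys = Suc n" "reval f xs (ys ! 0)"
    "\<forall>i<n. reval g (ys ! i # i # xs) (ys ! Suc i)" "ys ! n = y" by blast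
  have "reval g ((ys @ [z]) ! i # i # xs) ((ys @ [z]) ! Suc i)" if "i < Suc n" for i
    using that ys y by (cases "i = n") (auto simp: nth_append)
  then show ?case
    using ys by (intro exI[of _ "ys @ [z]"]) (auto simp: nth_append)
qed

lemma prim_loop_sound:
  assumes g: "compile_sound g" and chain: "\<forall>i<n. reval g (ys ! i # i # xs) (ys ! Suc i)"
    and ins: "map s ins = xs" "\<forall>r\<in>set ins. r < b"
    and code: "code_at prog L
      (DecJZ (b + 2) (L + 1) (L + code_len g + 4) # compile g (b # (b + 1) # ins) (b + 3) (b + 4) (L + 1) @
       [Move b (b + 3) (L + code_len g + 2), IncR (b + 1) (L + code_len g + 3), Jmp L])"
    and t: "t b = ys ! 0" "t (b + 1) = 0" "t (b + 2) = n" "\<forall>r<b. t r = s r"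
  shows "\<exists>t'. steps prog (L, t) (L + code_len g + 4, t') \<and> t' b = ys ! n \<and> (\<forall>r<b. t' r = s r)"
proof -
  have test: "code_at prog L [DecJZ (b + 2) (L + 1) (L + code_len g + 4)]"
    and body: "code_at prog (L + 1) (compile g (b # (b + 1) # ins) (b + 3) (b + 4) (L + 1))"
    and move: "code_at prog (L + code_len g + 1) [Move b (b + 3) (L + code_len g + 2)]"
    and incr: "code_at prog (L + code_len g + 2) [IncR (b + 1) (L + code_len g + 3)]"
    and jump: "code_at prog (L + code_len g + 3) [Jmp L]"
    using code by (simp_all add: code_at_append code_at_Cons length_compile ac_simps numeral_eq_Suc)
  define Q where "Q i t \<longleftrightarrow> t b = ys ! i \<and> t (b + 1) = i \<and> t (b + 2) = n - i \<and> (\<forall>r<b. t r = s r)"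
    for i t
  have "\<exists>t'. steps prog (L, t) (L, t') \<and> Q (Suc i) t'" if i: "i < n" "Q i t" for i t
  proof -
    let ?t1 = "t(b + 2 := n - Suc i)"
    have "map ?t1 ins = map s ins"
      using i(2) ins(2) by (auto simp: Q_def)
    then have args: "map ?t1 (b # (b + 1) # ins) = ys ! i # i # xs"
      using i(2) ins(1) by (simp add: Q_def)
    obtain t2 where t2: "steps prog (L + 1, ?t1) (L + 1 + code_len g, t2)"
      "t2 (b + 3) = ys ! Suc i" "\<forall>r. r \<noteq> b + 3 \<and> r < b + 4 \<longrightarrow> t2 r = ?t1 r"
      by (rule compile_soundD[OF g _ args _ _ _ body]) (use chain i(1) ins(2) in auto)
    let ?t3 = "t2(b := t2 (b + 3), b + 1 := Suc i)"
    have "steps prog (L, t) (L + 1, ?t1)"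
      by (rule steps_instr[OF test]) (use i in \<open>simp add: Q_def\<close>)
    also have "steps prog (L + 1, ?t1) (L + code_len g + 1, t2)"
      using t2(1) by (simp add: ac_simps)
    also have "steps prog \<dots> (L + code_len g + 2, t2(b := t2 (b + 3)))"
      by (rule steps_instr[OF move]) simp
    also have "steps prog \<dots> (L + code_len g + 3, ?t3)"
      by (rule steps_instr[OF incr]) (use t2(3) i(2) in \<open>simp add: Q_def\<close>)
    also have "steps prog \<dots> (L, ?t3)"
      by (rule steps_instr[OF jump]) simp
    finally show ?thesis
      using t2(2,3) i(2) by (intro exI[of _ ?t3]) (auto simp: Q_def)
  qed
  moreover have "Q 0 t" using t by (simp add: Q_def)
  ultimately obtain t' where t': "steps prog (L, t) (L, t')" "Q n t'"
    using steps_iterate[where Q = Q] by blast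
  have "steps prog (L, t') (L + code_len g + 4, t')"
    by (rule steps_instr[OF test]) (use t'(2) in \<open>simp add: Q_def\<close>)
  then show ?thesis
    using steps_trans[OF t'(1)] t'(2) by (auto simp: Q_def)
qed

lemma compile_sound_Prim:
  assumes f: "compile_sound f" and g: "compile_sound g"
  shows "compile_sound (Prim f g)"
  unfolding compile_sound_def
proof (intro allI impI)
  fix xs y ins out b a s prog
  assume "reval (Prim f g) xs y" and ins: "map s ins = xs" "out \<notin> set ins" "\<forall>r\<in>set ins. r < b"
    and out: "out < b" and code: "code_at prog a (compile (Prim f g) ins out b a)"
  then obtain n xs' where xs: "xs = n # xs'" by (auto elim: PrimE)
  with \<open>reval (Prim f g) xs y\<close> obtain ys where ys: "reval f xs' (ys ! 0)"
    "\<forall>i<n. reval g (ys ! i # i # xs') (ys ! Suc i)" "ys ! n = y"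
    using reval_Prim_chain by blast
  from ins(1) xs obtain i0 ins' where ins': "ins = i0 # ins'" "s i0 = n" "map s ins' = xs'"
    by (cases ins) auto
  have bound: "\<forall>r\<in>set ins'. r < b" "i0 < b" using ins(3) ins'(1) by auto
  define A where "A = a + code_len f"
  have cf: "code_at prog a (compile f ins' b (b + 4) a)"
    and c0: "code_at prog A [SetC (b + 1) 0 (A + 1)]"
    and c1: "code_at prog (A + 1) [Move (b + 2) i0 (A + 2)]"
    and loop: "code_at prog (A + 2)
      (DecJZ (b + 2) (A + 2 + 1) (A + 2 + code_len g + 4) #
       compile g (b # (b + 1) # ins') (b + 3) (b + 4) (A + 2 + 1) @
       [Move b (b + 3) (A + 2 + code_len g + 2), IncR (b + 1) (A + 2 + code_len g + 3), Jmp (A + 2)])"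
    and c6: "code_at prog (A + code_len g + 6) [Move out b (A + code_len g + 7)]"
    using code ins'(1) unfolding A_def
    by (simp_all add: code_at_append code_at_Cons length_compile ac_simps numeral_eq_Suc)
  obtain s1 where s1: "steps prog (a, s) (A, s1)" "s1 b = ys ! 0"
    "\<forall>r. r \<noteq> b \<and> r < b + 4 \<longrightarrow> s1 r = s r"
    by (rule compile_soundD[OF f ys(1) ins'(3) _ _ _ cf]) (use bound in \<open>auto simp: A_def\<close>)
  let ?s2 = "s1(b + 1 := 0, b + 2 := n)"
  obtain t where t: "steps prog (A + 2, ?s2) (A + code_len g + 6, t)" "t b = y" "\<forall>r<b. t r = s r"
    using prim_loop_sound[OF g ys(2) ins'(3) bound(1) loop, of ?s2] s1(2,3) ys(3)
    by (auto simp: ac_simps)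
  have "steps prog (a, s) (A, s1)" by (fact s1(1))
  also have "steps prog (A, s1) (A + 1, s1(b + 1 := 0))"
    by (rule steps_instr[OF c0]) simp
  also have "steps prog \<dots> (A + 2, ?s2)"
    by (rule steps_instr[OF c1]) (use s1(3) bound(2) ins'(2) in simp)
  also note t(1)
  also have "steps prog (A + code_len g + 6, t) (A + code_len g + 7, t(out := y))"
    by (rule steps_instr[OF c6]) (simp add: t(2))
  finally show "\<exists>s'. steps prog (a, s) (a + code_len (Prim f g), s') \<and> s' out = y \<and>
      (\<forall>r. r \<noteq> out \<and> r < b \<longrightarrow> s' r = s r)"
    using t(3) out by (intro exI[of _ "t(out := y)"]) (auto simp: A_def ac_simps)
qed

lemma mn_loop_sound:
  assumes f: "compile_sound f" and found: "reval f (y # xs) 0"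
    and below: "\<forall>m<y. \<exists>v. v \<noteq> 0 \<and> reval f (m # xs) v"
    and ins: "map s ins = xs" "\<forall>r\<in>set ins. r < b"
    and code: "code_at prog L (compile f (b # ins) (b + 1) (b + 2) L @
      [DecJZ (b + 1) (L + code_len f + 1) (L + code_len f + 3), IncR b (L + code_len f + 2), Jmp L])"
    and t: "t b = 0" "\<forall>r<b. t r = s r"
  shows "\<exists>t'. steps prog (L, t) (L + code_len f + 3, t') \<and> t' b = y \<and> (\<forall>r<b. t' r = s r)"
proof -
  have body: "code_at prog L (compile f (b # ins) (b + 1) (b + 2) L)"
    and test: "code_at prog (L + code_len f) [DecJZ (b + 1) (L + code_len f + 1) (L + code_len f + 3)]"
    and incr: "code_at prog (L + code_len f + 1) [IncR b (L + code_len f + 2)]"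
    and jump: "code_at prog (L + code_len f + 2) [Jmp L]"
    using code by (simp_all add: code_at_append code_at_Cons length_compile ac_simps numeral_eq_Suc)
  define Q where "Q m t \<longleftrightarrow> t b = m \<and> (\<forall>r<b. t r = s r)" for m t
  have run_body: "\<exists>t1. steps prog (L, t) (L + code_len f, t1) \<and> t1 (b + 1) = v \<and>
      (\<forall>r. r \<noteq> b + 1 \<and> r < b + 2 \<longrightarrow> t1 r = t r)"
    if "reval f (m # xs) v" "Q m t" for m v t
  proof -
    have "map t (b # ins) = m # xs"
      using that(2) ins by (auto simp: Q_def)
    then show ?thesis
      using that(1) ins(2) by (elim compile_soundD[OF f _ _ _ _ _ body]) auto
  qed
  have "\<exists>t'. steps prog (L, t) (L, t') \<and> Q (Suc m) t'" if m: "m < y" "Q m t" for m t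
  proof -
    obtain v t1 where v: "v \<noteq> 0" and t1: "steps prog (L, t) (L + code_len f, t1)" "t1 (b + 1) = v"
      "\<forall>r. r \<noteq> b + 1 \<and> r < b + 2 \<longrightarrow> t1 r = t r"
      using below m run_body by metis
    let ?t2 = "t1(b + 1 := v - 1, b := Suc m)"
    note t1(1)
    also have "steps prog (L + code_len f, t1) (L + code_len f + 1, t1(b + 1 := v - 1))"
      by (rule steps_instr[OF test]) (use v t1(2) in simp)
    also have "steps prog \<dots> (L + code_len f + 2, ?t2)"
      by (rule steps_instr[OF incr]) (use t1(3) m(2) in \<open>simp add: Q_def\<close>)
    also have "steps prog \<dots> (L, ?t2)"
      by (rule steps_instr[OF jump]) simp
    finally show ?thesis
      using t1(3) m(2) by (intro exI[of _ ?t2]) (auto simp: Q_def)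
  qed
  moreover have "Q 0 t" using t by (simp add: Q_def)
  ultimately obtain t' where t': "steps prog (L, t) (L, t')" "Q y t'"
    using steps_iterate[where Q = Q] by blast
  obtain t1 where t1: "steps prog (L, t') (L + code_len f, t1)" "t1 (b + 1) = 0"
    "\<forall>r. r \<noteq> b + 1 \<and> r < b + 2 \<longrightarrow> t1 r = t' r"
    using run_body[OF found t'(2)] by blast
  note t'(1)
  also note t1(1)
  also have "steps prog (L + code_len f, t1) (L + code_len f + 3, t1)"
    by (rule steps_instr[OF test]) (use t1(2) in simp)
  finally show ?thesis
    using t1(3) t'(2) by (auto simp: Q_def)
qed

lemma compile_sound_Mn:
  assumes f: "compile_sound f"
  shows "compile_sound (Mn f)"
  unfolding compile_sound_def
proof (intro allI impI)
  fix xs y ins out b a s prog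
  assume "reval (Mn f) xs y" and ins: "map s ins = xs" "out \<notin> set ins" "\<forall>r\<in>set ins. r < b"
    and out: "out < b" and code: "code_at prog a (compile (Mn f) ins out b a)"
  then have found: "reval f (y # xs) 0" and below: "\<forall>m<y. \<exists>v. v \<noteq> 0 \<and> reval f (m # xs) v"
    by (auto elim: MnE)
  have c0: "code_at prog a [SetC b 0 (a + 1)]"
    and loop: "code_at prog (a + 1) (compile f (b # ins) (b + 1) (b + 2) (a + 1) @
      [DecJZ (b + 1) (a + 1 + code_len f + 1) (a + 1 + code_len f + 3),
       IncR b (a + 1 + code_len f + 2), Jmp (a + 1)])"
    and c4: "code_at prog (a + code_len f + 4) [Move out b (a + code_len f + 5)]"
    using code by (simp_all add: code_at_append code_at_Cons length_compile ac_simps numeral_eq_Suc)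
  obtain t where t: "steps prog (a + 1, s(b := 0)) (a + code_len f + 4, t)" "t b = y"
    "\<forall>r<b. t r = s r"
    using mn_loop_sound[OF f found below ins(1,3) loop, of "s(b := 0)"] by (auto simp: ac_simps)
  have "steps prog (a, s) (a + 1, s(b := 0))"
    by (rule steps_instr[OF c0]) simp
  also note t(1)
  also have "steps prog (a + code_len f + 4, t) (a + code_len f + 5, t(out := y))"
    by (rule steps_instr[OF c4]) (simp add: t(2))
  finally show "\<exists>s'. steps prog (a, s) (a + code_len (Mn f), s') \<and> s' out = y \<and>
      (\<forall>r. r \<noteq> out \<and> r < b \<longrightarrow> s' r = s r)"
    using t(3) out by (intro exI[of _ "t(out := y)"]) (auto simp: ac_simps)
qed

lemma compile_sound: "compile_sound g"
proof (induction g)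
  case (Comp f gs)
  then show ?case by (simp add: compile_sound_Comp)
qed (simp_all add: compile_sound_Zero compile_sound_Succ compile_sound_Proj
  compile_sound_Prim compile_sound_Mn)

definition input_regs :: "nat list \<Rightarrow> nat \<Rightarrow> nat" where
  "input_regs xs q = (if q < length xs then xs ! q else 0)"

definition program :: "recf \<Rightarrow> nat \<Rightarrow> instr list" where
  "program g n = compile g [0..<n] n (Suc n) 0 @ [Halt]"

lemma program_computes:
  assumes "reval g xs y"
  obtains s' where "steps (program g (length xs)) (0, input_regs xs) (code_len g, s')"
    and "s' (length xs) = y"
proof -
  let ?prog = "program g (length xs)"
  have "map (input_regs xs) [0..<length xs] = xs"
    by (rule nth_equalityI) (simp_all add: input_regs_def)
  moreover have "code_at ?prog 0 (compile g [0..<length xs] (length xs) (Suc (length xs)) 0)"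
    by (simp add: program_def code_at_def)
  ultimately show thesis
    by (elim compile_soundD[OF compile_sound assms]) (auto intro: that)
qed

lemma exec1_program_halt: "exec1 (program g n) (code_len g, s) = (code_len g, s)"
  by (simp add: exec1_def program_def nth_append length_compile)

section \<open>Register machines as QFLIA transition systems\<close>

definition encodes_state :: "nat \<Rightarrow> (nat \<Rightarrow> int) \<Rightarrow> mstate \<Rightarrow> bool" where
  "encodes_state R \<sigma> st \<longleftrightarrow> \<sigma> 0 = int (fst st) \<and> (\<forall>q<R. \<sigma> (Suc q) = int (snd st q))"

definition state_val :: "mstate \<Rightarrow> nat \<Rightarrow> int" where
  "state_val st v = (if v = 0 then int (fst st) else int (snd st (v - 1)))"

lemma encodes_state_val: "encodes_state R (state_val st) st"
  by (simp add: encodes_state_def state_val_def)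

definition conjs :: "'v fm list \<Rightarrow> 'v fm" where
  "conjs fs = foldr Conj fs TT"

definition disjs :: "'v fm list \<Rightarrow> 'v fm" where
  "disjs fs = foldr Disj fs FF"

lemma sat_conjs [simp]: "sat \<sigma> (conjs fs) \<longleftrightarrow> (\<forall>f\<in>set fs. sat \<sigma> f)"
  unfolding conjs_def by (induction fs) auto

lemma sat_disjs [simp]: "sat \<sigma> (disjs fs) \<longleftrightarrow> (\<exists>f\<in>set fs. sat \<sigma> f)"
  unfolding disjs_def by (induction fs) auto

lemma set_conjs [simp]: "set_fm (conjs fs) = (\<Union>f\<in>set fs. set_fm f)"
  unfolding conjs_def by (induction fs) auto

lemma set_disjs [simp]: "set_fm (disjs fs) = (\<Union>f\<in>set fs. set_fm f)"
  unfolding disjs_def by (induction fs) auto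

lemma teval_map_lterm: "teval \<sigma> (map_lterm h t) = teval (\<sigma> \<circ> h) t"
  by (induction t) (simp_all add: comp_def)

lemma sat_map_fm: "sat \<sigma> (map_fm h f) = sat (\<sigma> \<circ> h) f"
  by (induction f) (simp_all add: teval_map_lterm comp_def)

definition state_fm :: "nat \<Rightarrow> mstate \<Rightarrow> nat fm" where
  "state_fm R st = conjs (Eq (Var 0) (Const (int (fst st))) #
     map (\<lambda>q. Eq (Var (Suc q)) (Const (int (snd st q)))) [0..<R])"

lemma sat_state_fm: "sat \<sigma> (state_fm R st) \<longleftrightarrow> encodes_state R \<sigma> st"
  unfolding state_fm_def encodes_state_def by auto

lemma set_state_fm: "set_fm (state_fm R st) \<subseteq> {..R}"
  unfolding state_fm_def by auto

fun max_reg :: "instr \<Rightarrow> nat" where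
  "max_reg (SetC r k j) = r"
| "max_reg (Move r q j) = max r q"
| "max_reg (IncR r j) = r"
| "max_reg (DecJZ r j k) = r"
| "max_reg (Jmp j) = 0"
| "max_reg Halt = 0"

definition frame :: "nat \<Rightarrow> nat \<Rightarrow> (nat + nat) fm" where
  "frame R r = conjs (map (\<lambda>q. Eq (Var (Inr (Suc q))) (Var (Inl (Suc q)))) (filter (\<lambda>q. q \<noteq> r) [0..<R]))"

lemma sat_frame: "sat \<sigma> (frame R r) \<longleftrightarrow> (\<forall>q<R. q \<noteq> r \<longrightarrow> \<sigma> (Inr (Suc q)) = \<sigma> (Inl (Suc q)))"
  unfolding frame_def by auto

abbreviation (input) pc :: "(nat + nat) lterm" where "pc \<equiv> Var (Inl 0)"
abbreviation (input) pc' :: "(nat + nat) lterm" where "pc' \<equiv> Var (Inr 0)"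
abbreviation (input) reg :: "nat \<Rightarrow> (nat + nat) lterm" where "reg q \<equiv> Var (Inl (Suc q))"
abbreviation (input) reg' :: "nat \<Rightarrow> (nat + nat) lterm" where "reg' q \<equiv> Var (Inr (Suc q))"

fun instr_fm :: "nat \<Rightarrow> nat \<Rightarrow> instr \<Rightarrow> (nat + nat) fm" where
  "instr_fm R p (SetC r k j) = conjs [Eq pc' (Const (int j)), Eq (reg' r) (Const (int k)), frame R r]"
| "instr_fm R p (Move r q j) = conjs [Eq pc' (Const (int j)), Eq (reg' r) (reg q), frame R r]"
| "instr_fm R p (IncR r j) =
     conjs [Eq pc' (Const (int j)), Eq (reg' r) (Add (reg r) (Const 1)), frame R r]"
| "instr_fm R p (DecJZ r j k) =
     Disj (conjs [Eq (reg r) (Const 0), Eq pc' (Const (int k)), frame R R])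
          (conjs [Lt (Const 0) (reg r), Eq pc' (Const (int j)),
                  Eq (Add (reg' r) (Const 1)) (reg r), frame R r])"
| "instr_fm R p (Jmp j) = conjs [Eq pc' (Const (int j)), frame R R]"
| "instr_fm R p Halt = conjs [Eq pc' (Const (int p)), frame R R]"

definition program_tr :: "nat \<Rightarrow> instr list \<Rightarrow> (nat + nat) fm" where
  "program_tr R prog =
     disjs (map (\<lambda>p. Conj (Eq pc (Const (int p))) (instr_fm R p (prog ! p))) [0..<length prog] @
       [conjs [Le (Const (int (length prog))) pc, Eq pc' pc, frame R R]])"

lemma sat_instr_fm:
  assumes "encodes_state R (\<sigma> \<circ> Inl) (p, r)" "max_reg i < R"
  shows "sat \<sigma> (instr_fm R p i) \<longleftrightarrow> encodes_state R (\<sigma> \<circ> Inr) (exec_instr p i r)"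
  using assms by (cases i) (auto simp: encodes_state_def sat_frame split: if_splits)

lemma sat_program_tr:
  assumes "encodes_state R (\<sigma> \<circ> Inl) st" "\<forall>i\<in>set prog. max_reg i < R"
  shows "sat \<sigma> (program_tr R prog) \<longleftrightarrow> encodes_state R (\<sigma> \<circ> Inr) (exec1 prog st)"
proof (cases st)
  case (Pair p r)
  have pc: "\<sigma> (Inl 0) = int p" using assms(1) Pair by (simp add: encodes_state_def)
  show ?thesis
  proof (cases "p < length prog")
    case True
    then have "sat \<sigma> (program_tr R prog) \<longleftrightarrow> sat \<sigma> (instr_fm R p (prog ! p))"
      using pc by (auto simp: program_tr_def)
    also have "\<dots> \<longleftrightarrow> encodes_state R (\<sigma> \<circ> Inr) (exec1 prog st)"
      using sat_instr_fm[of R \<sigma> p r "prog ! p"] assms True Pair by (simp add: exec1_def)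
    finally show ?thesis .
  next
    case False
    then show ?thesis
      using assms(1) pc Pair by (auto simp: program_tr_def exec1_def encodes_state_def sat_frame)
  qed
qed

lemma set_frame: "set_fm (frame R r) \<subseteq> Inl ` {..R} \<union> Inr ` {..R}"
  unfolding frame_def by auto

lemma set_instr_fm: "max_reg i < R \<Longrightarrow> set_fm (instr_fm R p i) \<subseteq> Inl ` {..R} \<union> Inr ` {..R}"
  using set_frame[of R] by (cases i) (auto 0 3)

lemma set_program_tr:
  assumes "\<forall>i\<in>set prog. max_reg i < R"
  shows "set_fm (program_tr R prog) \<subseteq> Inl ` {..R} \<union> Inr ` {..R}"
proof -
  let ?vars = "Inl ` {..R} \<union> Inr ` {..R}"
  have "set_fm (instr_fm R p (prog ! p)) \<subseteq> ?vars" if "p < length prog" for p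
    using set_instr_fm assms that by simp
  then have "\<forall>\<phi>\<in>set (map (\<lambda>p. Conj (Eq pc (Const (int p))) (instr_fm R p (prog ! p)))
      [0..<length prog]). set_fm \<phi> \<subseteq> ?vars"
    by auto
  moreover have "set_fm (conjs [Le (Const (int (length prog))) pc, Eq pc' pc, frame R R]) \<subseteq> ?vars"
    using set_frame[of R R] by auto
  ultimately show ?thesis
    unfolding program_tr_def set_disjs by (auto simp del: set_conjs)
qed

lemma invariant_holds_on_reachable:
  assumes inv: "inductive_invariant V Init (program_tr R prog) P I"
    and regs: "\<forall>i\<in>set prog. max_reg i < R"
    and init: "\<And>\<sigma>. sat \<sigma> Init \<longleftrightarrow> encodes_state R \<sigma> st0"
    and reach: "steps prog st0 st"
  shows "sat (state_val st) P"
proof -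
  have "sat (state_val ((exec1 prog ^^ n) st0)) I" for n
  proof (induction n)
    case 0
    then show ?case using inv init encodes_state_val by (simp add: inductive_invariant_def)
  next
    case (Suc n)
    let ?st = "(exec1 prog ^^ n) st0"
    let ?\<sigma> = "case_sum (state_val ?st) (state_val (exec1 prog ?st))"
    have pre: "?\<sigma> \<circ> Inl = state_val ?st" and post: "?\<sigma> \<circ> Inr = state_val (exec1 prog ?st)"
      by auto
    have "sat ?\<sigma> (program_tr R prog)"
      using sat_program_tr[OF _ regs] encodes_state_val pre post by metis
    moreover have "sat ?\<sigma> (map_fm Inl I)"
      using Suc.IH by (simp add: sat_map_fm pre)
    ultimately have "sat ?\<sigma> (map_fm Inr I)"
      using inv by (simp add: inductive_invariant_def)
    then show ?case by (simp add: sat_map_fm post)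
  qed
  then show ?thesis
    using reach inv unfolding steps_def inductive_invariant_def by blast
qed

lemma halting_run_invariant:
  assumes regs: "\<forall>i\<in>set prog. max_reg i < R" and V: "{..R} \<subseteq> V"
    and init: "\<And>\<sigma>. sat \<sigma> Init \<longleftrightarrow> encodes_state R \<sigma> st0"
    and "steps prog st0 st_halt" and halt: "exec1 prog st_halt = st_halt"
    and safe: "\<And>\<sigma> st. steps prog st0 st \<Longrightarrow> encodes_state R \<sigma> st \<Longrightarrow> sat \<sigma> P"
  shows "has_qflia_invariant V Init (program_tr R prog) P"
proof -
  obtain k where k: "(exec1 prog ^^ k) st0 = st_halt"
    using \<open>steps prog st0 st_halt\<close> unfolding steps_def by blast
  let ?run = "\<lambda>i. (exec1 prog ^^ i) st0"
  define I where "I = disjs (map (\<lambda>i. state_fm R (?run i)) [0..<Suc k])"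
  have sat_I: "sat \<sigma> I \<longleftrightarrow> (\<exists>i\<le>k. encodes_state R \<sigma> (?run i))" for \<sigma>
    unfolding I_def by (auto simp: sat_state_fm less_Suc_eq_le simp del: upt_Suc)
  have step_closed: "\<exists>j\<le>k. exec1 prog (?run i) = ?run j" if "i \<le> k" for i
  proof (cases "i < k")
    case True
    then show ?thesis by (intro exI[of _ "Suc i"]) auto
  next
    case False
    then show ?thesis using that k halt by (intro exI[of _ k]) auto
  qed
  have "inductive_invariant V Init (program_tr R prog) P I"
    unfolding inductive_invariant_def
  proof (intro conjI allI impI)
    have "set_fm (state_fm R st) \<subseteq> V" for st
      using set_state_fm V by blast
    then show "set_fm I \<subseteq> V"
      unfolding I_def set_disjs set_map by blast
  next
    fix \<sigma> :: "nat \<Rightarrow> int"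
    assume "sat \<sigma> Init"
    then show "sat \<sigma> I" using init sat_I by force
  next
    fix \<sigma> :: "nat + nat \<Rightarrow> int"
    assume "sat \<sigma> (Conj (map_fm Inl I) (program_tr R prog))"
    then obtain i where "i \<le> k" "encodes_state R (\<sigma> \<circ> Inl) (?run i)" "sat \<sigma> (program_tr R prog)"
      by (auto simp: sat_map_fm sat_I)
    then show "sat \<sigma> (map_fm Inr I)"
      using step_closed sat_program_tr[OF _ regs] by (metis sat_I sat_map_fm)
  next
    fix \<sigma> :: "nat \<Rightarrow> int"
    assume "sat \<sigma> I"
    then show "sat \<sigma> P" using sat_I safe unfolding steps_def by blast
  qed
  then show ?thesis unfolding has_qflia_invariant_def by blast
qed

section \<open>A self-describing instance\<close>

lemma reval_comp1: "reval g xs y \<Longrightarrow> reval f [y] z \<Longrightarrow> reval (Comp f [g]) xs z"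
  by (rule reval.comp[where ys = "[y]"]) auto

lemma reval_comp2:
  "reval g1 xs y1 \<Longrightarrow> reval g2 xs y2 \<Longrightarrow> reval f [y1, y2] z \<Longrightarrow> reval (Comp f [g1, g2]) xs z"
  by (rule reval.comp[where ys = "[y1, y2]"]) auto

lemma reval_proj: "i < length xs \<Longrightarrow> xs ! i = y \<Longrightarrow> reval (Proj i) xs y"
  using reval.proj by auto

definition add_rf :: recf where
  "add_rf = Prim (Proj 0) (Comp Succ [Proj 0])"

lemma reval_add_rf: "reval add_rf [n, x] (n + x)"
  unfolding add_rf_def
proof (induction n)
  case 0
  then show ?case by (auto intro!: reval.prim0 reval_proj)
next
  case (Suc n)
  have "reval (Comp Succ [Proj 0]) [n + x, n, x] (Suc (n + x))"
    by (rule reval_comp1[OF reval_proj]) (auto intro: reval.succ)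
  then show ?case using reval.primS[OF Suc] by simp
qed

definition triangle_rf :: recf where
  "triangle_rf = Prim Zero (Comp add_rf [Comp Succ [Proj 1], Proj 0])"

lemma reval_triangle_rf: "reval triangle_rf [n] (triangle n)"
  unfolding triangle_rf_def
proof (induction n)
  case 0
  then show ?case by (auto intro!: reval.prim0 reval.zero)
next
  case (Suc n)
  have "reval (Comp add_rf [Comp Succ [Proj 1], Proj 0]) [triangle n, n] (Suc n + triangle n)"
    by (rule reval_comp2[OF reval_comp1[OF reval_proj] reval_proj reval_add_rf])
      (auto intro: reval.succ)
  then show ?case using reval.primS[OF Suc] by (simp add: add.commute)
qed

definition prod_encode_rf :: recf where
  "prod_encode_rf = Comp add_rf [Proj 0, Comp triangle_rf [Comp add_rf [Proj 0, Proj 1]]]"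

lemma reval_prod_encode_rf: "reval prod_encode_rf [m, n] (prod_encode (m, n))"
  unfolding prod_encode_rf_def
  by (rule reval_comp2[OF reval_proj
        reval_comp1[OF reval_comp2[OF reval_proj reval_proj reval_add_rf] reval_triangle_rf]])
     (use reval_add_rf[of m "triangle (m + n)"] in \<open>auto simp: prod_encode_def add.commute\<close>)

definition pair_rf :: "recf \<Rightarrow> recf \<Rightarrow> recf" where
  "pair_rf f g = Comp prod_encode_rf [f, g]"

lemma reval_pair_rf: "reval f xs u \<Longrightarrow> reval g xs v \<Longrightarrow> reval (pair_rf f g) xs (prod_encode (u, v))"
  unfolding pair_rf_def by (rule reval_comp2[OF _ _ reval_prod_encode_rf])

primrec const_rf :: "nat \<Rightarrow> recf" where
  "const_rf 0 = Zero"
| "const_rf (Suc k) = Comp Succ [const_rf k]"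

lemma reval_const_rf: "reval (const_rf k) xs k"
  by (induction k) (auto intro: reval.zero reval_comp1 reval.succ)

definition pin_regs_fm :: "nat list \<Rightarrow> nat list \<Rightarrow> nat fm \<Rightarrow> nat fm" where
  "pin_regs_fm is xs \<phi> = foldr (\<lambda>i. Conj (Eq (Var (Suc i)) (Const (int (xs ! i))))) is \<phi>"

definition zero_regs_fm :: "nat \<Rightarrow> nat \<Rightarrow> nat fm" where
  "zero_regs_fm n R = conjs (Eq (Var 0) (Const 0) # map (\<lambda>q. Eq (Var (Suc q)) (Const 0)) [n..<R])"

lemma sat_pin_regs_fm:
  "sat \<sigma> (pin_regs_fm is xs \<phi>) \<longleftrightarrow> (\<forall>i\<in>set is. \<sigma> (Suc i) = int (xs ! i)) \<and> sat \<sigma> \<phi>"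
  unfolding pin_regs_fm_def by (induction "is") auto

lemma set_pin_regs_fm: "set_fm (pin_regs_fm is xs \<phi>) = Suc ` set is \<union> set_fm \<phi>"
  unfolding pin_regs_fm_def by (induction "is") auto

lemma sat_initial_fm:
  assumes "length xs \<le> R"
  shows "sat \<sigma> (pin_regs_fm [0..<length xs] xs (zero_regs_fm (length xs) R)) \<longleftrightarrow>
    encodes_state R \<sigma> (0, input_regs xs)"
  using assms unfolding sat_pin_regs_fm zero_regs_fm_def encodes_state_def input_regs_def
  by (auto simp: not_less)

lemma set_initial_fm:
  "length xs \<le> R \<Longrightarrow> set_fm (pin_regs_fm [0..<length xs] xs (zero_regs_fm (length xs) R)) \<subseteq> {..R}"
  unfolding set_pin_regs_fm zero_regs_fm_def by auto

text \<open>The code of a pinned register equation is computable from the register value, since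
\<open>int_encode (int c) = 2 c\<close>.\<close>

definition pin_reg_rf :: "nat \<Rightarrow> recf" where
  "pin_reg_rf i = pair_rf (const_rf 2)
     (pair_rf (pair_rf (const_rf 0) (const_rf (Suc i)))
              (pair_rf (const_rf 1) (Comp add_rf [Proj i, Proj i])))"

lemma reval_pin_reg_rf:
  assumes "i < length xs"
  shows "reval (pin_reg_rf i) xs (encode_fm id (Eq (Var (Suc i)) (Const (int (xs ! i)))))"
proof -
  have "reval (pin_reg_rf i) xs
      (prod_encode (2, prod_encode (prod_encode (0, Suc i), prod_encode (1, xs ! i + xs ! i))))"
    unfolding pin_reg_rf_def
    by (intro reval_pair_rf reval_const_rf reval_comp2[OF reval_proj reval_proj reval_add_rf])
      (use assms in simp_all)
  then show ?thesis by (simp add: int_encode_def sum_encode_def mult_2)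
qed

primrec pin_regs_rf :: "nat list \<Rightarrow> recf" where
  "pin_regs_rf [] = Proj 1"
| "pin_regs_rf (i # is) = pair_rf (const_rf 6) (pair_rf (pin_reg_rf i) (pin_regs_rf is))"

lemma reval_pin_regs_rf:
  assumes "\<forall>i\<in>set is. i < length xs" "1 < length xs" "xs ! 1 = encode_fm id \<phi>"
  shows "reval (pin_regs_rf is) xs (encode_fm id (pin_regs_fm is xs \<phi>))"
  using assms(1)
proof (induction "is")
  case Nil
  have "pin_regs_fm [] xs \<phi> = \<phi>" by (simp add: pin_regs_fm_def)
  then show ?case using reval_proj[OF assms(2,3)] by (simp only: pin_regs_rf.simps)
next
  case (Cons i "is")
  have code: "encode_fm id (pin_regs_fm (i # is) xs \<phi>) = prod_encode (6, prod_encode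
      (encode_fm id (Eq (Var (Suc i)) (Const (int (xs ! i)))), encode_fm id (pin_regs_fm is xs \<phi>)))"
    by (simp add: pin_regs_fm_def)
  have "reval (pin_regs_rf is) xs (encode_fm id (pin_regs_fm is xs \<phi>))"
    by (rule Cons.IH) (use Cons.prems in simp)
  then show ?case
    unfolding pin_regs_rf.simps code
    by (intro reval_pair_rf reval_const_rf reval_pin_reg_rf) (use Cons.prems in simp_all)
qed

text \<open>Registers \<open>0, \<dots>, 3\<close> hold the codes of \<open>V\<close>, of the tail \<open>\<phi>\<close> of the initial condition,
of the transition formula and of the property; the initial condition pins them to these values,
so its own code is a recursive function of them.\<close>

definition instance_rf :: recf where
  "instance_rf = pair_rf (Proj 0) (pair_rf (pin_regs_rf [0..<4]) (pair_rf (Proj 2) (Proj 3)))"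

lemma reval_instance_rf:
  assumes "xs = [set_encode V, encode_fm id \<phi>, encode_fm sum_encode TR, encode_fm id P]"
  shows "reval instance_rf xs (encode_instance V (pin_regs_fm [0..<4] xs \<phi>) TR P)"
  unfolding instance_rf_def encode_instance_def
  using reval_pin_regs_rf[of "[0..<4]" xs \<phi>] assms
  by (auto intro!: reval_pair_rf reval_proj)

lemma has_qflia_invariant_iff_output:
  assumes regs: "\<forall>i\<in>set prog. max_reg i < R" and q: "q < R" and V: "{..R} \<subseteq> V"
    and init: "\<And>\<sigma>. sat \<sigma> Init \<longleftrightarrow> encodes_state R \<sigma> st0"
    and run: "steps prog st0 (h, s)" and halt: "\<And>s. exec1 prog (h, s) = (h, s)"
  shows "has_qflia_invariant V Init (program_tr R prog)
      (Neg (Conj (Eq (Var 0) (Const (int h))) (Eq (Var (Suc q)) (Const 1)))) \<longleftrightarrow> s q \<noteq> 1"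
    (is "has_qflia_invariant V Init ?TR ?P \<longleftrightarrow> _")
proof
  assume "has_qflia_invariant V Init ?TR ?P"
  then obtain I where "inductive_invariant V Init ?TR ?P I"
    unfolding has_qflia_invariant_def by blast
  from invariant_holds_on_reachable[OF this regs init run] show "s q \<noteq> 1"
    by (simp add: state_val_def)
next
  assume "s q \<noteq> 1"
  have "sat \<sigma> ?P" if "steps prog st0 st" "encodes_state R \<sigma> st" for \<sigma> st
  proof (cases "fst st = h")
    case True
    then have "st = (h, s)"
      using steps_fixpoint_unique[OF that(1) run] halt by (metis prod.collapse)
    then show ?thesis using that(2) q \<open>s q \<noteq> 1\<close> by (simp add: encodes_state_def)
  next
    case False
    then show ?thesis using that(2) by (simp add: encodes_state_def)
  qed
  then show "has_qflia_invariant V Init ?TR ?P"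
    by (rule halting_run_invariant[OF regs V init run halt])
qed

lemma diagonal_instance:
  fixes f :: recf
  obtains V Init TR P where "well_formed_ts V Init TR P"
    and "\<And>y. reval f [encode_instance V Init TR P] y \<Longrightarrow> has_qflia_invariant V Init TR P \<longleftrightarrow> y \<noteq> 1"
proof -
  define g where "g = Comp f [instance_rf]"
  define prog where "prog = program g 4"
  define R where "R = Suc (Max (insert 4 (max_reg ` set prog)))"
  define TR where "TR = program_tr R prog"
  define P :: "nat fm" where "P = Neg (Conj (Eq (Var 0) (Const (int (code_len g)))) (Eq (Var 5) (Const 1)))"
  define xs where "xs = [set_encode {..R}, encode_fm id (zero_regs_fm 4 R), encode_fm sum_encode TR, encode_fm id P]"
  define Init where "Init = pin_regs_fm [0..<4] xs (zero_regs_fm 4 R)"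
  have regs: "\<forall>i\<in>set prog. max_reg i < R" and "4 < R"
    unfolding R_def less_Suc_eq_le by simp_all
  have len: "length xs = 4" by (simp add: xs_def)
  have init: "\<And>\<sigma>. sat \<sigma> Init \<longleftrightarrow> encodes_state R \<sigma> (0, input_regs xs)"
    using sat_initial_fm[of xs R] \<open>4 < R\<close> by (simp add: Init_def len)
  have "well_formed_ts {..R} Init TR P"
    using set_initial_fm[of xs R] set_program_tr[OF regs] \<open>4 < R\<close>
    by (auto simp: well_formed_ts_def Init_def len TR_def P_def)
  moreover have "has_qflia_invariant {..R} Init TR P \<longleftrightarrow> y \<noteq> 1"
    if "reval f [encode_instance {..R} Init TR P] y" for y
  proof -
    have "reval instance_rf xs (encode_instance {..R} Init TR P)"
      unfolding Init_def by (rule reval_instance_rf[OF xs_def])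
    then have "reval g xs y"
      unfolding g_def using that by (rule reval_comp1)
    then obtain s where run: "steps prog (0, input_regs xs) (code_len g, s)" and "s 4 = y"
      unfolding prog_def by (rule program_computes[where xs = xs, unfolded len])
    then show ?thesis
      using has_qflia_invariant_iff_output[OF regs \<open>4 < R\<close> order_refl init run]
      unfolding TR_def P_def prog_def by (simp add: exec1_program_halt)
  qed
  ultimately show thesis by (rule that)
qed

theorem mainTheorem1:
  shows "\<not> (\<exists>f :: recf. \<forall>V Init TR P.
            well_formed_ts V Init TR P \<longrightarrow>
            reval f [encode_instance V Init TR P]
              (if has_qflia_invariant V Init TR P then 1 else 0))"
proof
  assume "\<exists>f :: recf. \<forall>V Init TR P. well_formed_ts V Init TR P \<longrightarrow>
      reval f [encode_instance V Init TR P] (if has_qflia_invariant V Init TR P then 1 else 0)"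
  then obtain f where decide: "\<And>V Init TR P. well_formed_ts V Init TR P \<Longrightarrow>
      reval f [encode_instance V Init TR P] (if has_qflia_invariant V Init TR P then 1 else 0)"
    by blast
  obtain V Init TR P where "well_formed_ts V Init TR P"
    and diagonal: "\<And>y. reval f [encode_instance V Init TR P] y \<Longrightarrow>
      has_qflia_invariant V Init TR P \<longleftrightarrow> y \<noteq> 1"
    using diagonal_instance[of f] by blast
  from diagonal[OF decide[OF this(1)]] show False
    by (simp split: if_splits)
qed

end
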